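(* For $n\ge2$ and all $P,Q\in\Gamma_n$, $D_{h\Delta}(P\|Q)\le \frac34 D_{J\Delta}(P\|Q)$.
   Context: $\Gamma_n=\{P=(p_1,\dots,p_n): p_i>0,\ \sum p_i=1\}$. $h(P\|Q)=\frac12\sum_{i=1}^n(\sqrt{p_i}-\sqrt{q_i})^2$; $\Delta(P\|Q)=\sum_{i=1}^n\frac{(p_i-q_i)^2}{p_i+q_i}$; $J(P\|Q)=\sum_{i=1}^n(p_i-q_i)\ln\frac{p_i}{q_i}$. $D_{h\Delta}=h-\frac14\Delta$, $D_{J\Delta}=\frac18J-\frac14\Delta$. *)

theory Defs
  imports Complex_Main
begin

definition Gamma :: "nat \<Rightarrow> (nat \<Rightarrow> real) set" where
  "Gamma n = {p. (\<forall>i\<in>{1..n}. p i > 0) \<and> (\<Sum>i=1..n. p i) = 1}"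

definition hellinger :: "nat \<Rightarrow> (nat \<Rightarrow> real) \<Rightarrow> (nat \<Rightarrow> real) \<Rightarrow> real" where
  "hellinger n p q = (1/2) * (\<Sum>i=1..n. (sqrt (p i) - sqrt (q i))^2)"

definition triang :: "nat \<Rightarrow> (nat \<Rightarrow> real) \<Rightarrow> (nat \<Rightarrow> real) \<Rightarrow> real" where
  "triang n p q = (\<Sum>i=1..n. (p i - q i)^2 / (p i + q i))"

definition jdiv :: "nat \<Rightarrow> (nat \<Rightarrow> real) \<Rightarrow> (nat \<Rightarrow> real) \<Rightarrow> real" where
  "jdiv n p q = (\<Sum>i=1..n. (p i - q i) * ln (p i / q i))"

definition D_hDelta :: "nat \<Rightarrow> (nat \<Rightarrow> real) \<Rightarrow> (nat \<Rightarrow> real) \<Rightarrow> real" where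
  "D_hDelta n p q = hellinger n p q - (1/4) * triang n p q"

definition D_JDelta :: "nat \<Rightarrow> (nat \<Rightarrow> real) \<Rightarrow> (nat \<Rightarrow> real) \<Rightarrow> real" where
  "D_JDelta n p q = (1/8) * jdiv n p q - (1/4) * triang n p q"

end

theory Submission
  imports Defs
begin

text \<open>The claim is equivalent to \<open>h \<le> (3/32) J + (1/16) \<Delta>\<close>, which holds term by term. For
  \<open>a, b > 0\<close> and \<open>s = sqrt (a/b)\<close>, the gap in the term inequality factors as
  \<open>(3/16) b (s + 1) (s - 1) (ln s - r s)\<close> with \<open>r = ln_approx\<close>.
  The difference \<open>ln t - r t\<close> vanishes at \<open>t = 1\<close> and its derivative
  \<open>(t - 1)^4 (3t^2 + 2t + 3) / (3t ((t + 1)(t^2 + 1))^2)\<close> is nonnegative, so it has the sign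
  of \<open>s - 1\<close>.\<close>

definition ln_approx :: "real \<Rightarrow> real" where
  "ln_approx s = (s - 1) * (7*s^2 - 2*s + 7) / (3 * ((s + 1) * (s^2 + 1)))"

lemma ln_approx_has_real_derivative:
  fixes t :: real
  assumes "t \<noteq> -1"
  shows "(ln_approx has_real_derivative
           4 * (4*t^4 - t^3 + 6*t^2 - t + 4) / (3 * ((t + 1) * (t^2 + 1))^2)) (at t)"
proof -
  have "t + 1 \<noteq> 0" "t^2 + 1 \<noteq> 0"
    using assms by (auto simp: add_eq_0_iff2) (smt (verit) zero_le_power2)
  then have nz: "3 * ((t + 1) * (t^2 + 1)) \<noteq> 0"
    by simp
  have num: "((\<lambda>s. (s - 1) * (7*s^2 - 2*s + 7)) has_real_derivative 21*t^2 - 18*t + 9) (at t)"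
    by (auto intro!: derivative_eq_intros simp: algebra_simps power2_eq_square)
  have den: "((\<lambda>s. 3 * ((s + 1) * (s^2 + 1))) has_real_derivative 3 * (3*t^2 + 2*t + 1)) (at t)"
    by (auto intro!: derivative_eq_intros simp: algebra_simps power2_eq_square)
  from DERIV_divide [OF num den nz] show ?thesis
    unfolding ln_approx_def [abs_def]
  proof (rule DERIV_cong)
    show "((21*t^2 - 18*t + 9) * (3 * ((t + 1) * (t^2 + 1)))
            - (t - 1) * (7*t^2 - 2*t + 7) * (3 * (3*t^2 + 2*t + 1)))
            / (3 * ((t + 1) * (t^2 + 1)) * (3 * ((t + 1) * (t^2 + 1))))
          = 4 * (4*t^4 - t^3 + 6*t^2 - t + 4) / (3 * ((t + 1) * (t^2 + 1))^2)"
      using nz by (simp add: divide_simps) algebra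
  qed
qed

lemma ln_minus_ln_approx_has_real_derivative:
  fixes t :: real
  assumes "t > 0"
  shows "((\<lambda>s. ln s - ln_approx s) has_real_derivative
           (t - 1)^4 * (3*t^2 + 2*t + 3) / (3 * t * ((t + 1) * (t^2 + 1))^2)) (at t)"
proof -
  have "t \<noteq> -1"
    using assms by simp
  from DERIV_diff [OF DERIV_ln [OF assms] ln_approx_has_real_derivative [OF this]]
  show ?thesis
  proof (rule DERIV_cong)
    have "t + 1 > 0" "t^2 + 1 > 0"
      using assms by (simp_all add: add_pos_nonneg)
    then show "inverse t - 4 * (4*t^4 - t^3 + 6*t^2 - t + 4) / (3 * ((t + 1) * (t^2 + 1))^2)
             = (t - 1)^4 * (3*t^2 + 2*t + 3) / (3 * t * ((t + 1) * (t^2 + 1))^2)"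
      using assms by (simp add: divide_simps) algebra
  qed
qed

lemma ln_minus_ln_approx_mono:
  fixes s t :: real
  assumes "0 < s" "s \<le> t"
  shows "ln s - ln_approx s \<le> ln t - ln_approx t"
proof (rule deriv_nonneg_imp_mono [OF ln_minus_ln_approx_has_real_derivative _ \<open>s \<le> t\<close>])
  fix x
  assume "x \<in> {s..t}"
  then have "x > 0"
    using assms by auto
  then show "x > 0" and "(x - 1)^4 * (3*x^2 + 2*x + 3) / (3 * x * ((x + 1) * (x^2 + 1))^2) \<ge> 0"
    by (simp_all add: add_pos_nonneg)
qed

lemma ln_minus_ln_approx_sign:
  fixes s :: real
  assumes "0 < s"
  shows "0 \<le> (s - 1) * (ln s - ln_approx s)"
proof (cases "s \<le> 1")
  case True
  with ln_minus_ln_approx_mono [OF assms True] show ?thesis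
    by (simp add: ln_approx_def mult_nonpos_nonpos)
next
  case False
  with ln_minus_ln_approx_mono [of 1 s] show ?thesis
    by (simp add: ln_approx_def)
qed

lemma hellinger_summand_le:
  fixes a b :: real
  assumes "0 < a" "0 < b"
  shows "(1/2) * (sqrt a - sqrt b)^2 \<le> 3/32 * ((a - b) * ln (a / b)) + 1/16 * ((a - b)^2 / (a + b))"
proof -
  define s where "s = sqrt (a / b)"
  define y where "y = sqrt b"
  have "0 < s" "0 < y"
    using assms by (simp_all add: s_def y_def)
  have b: "b = y^2" and sqrt_b: "sqrt b = y"
    using assms by (simp_all add: y_def)
  have sqrt_a: "sqrt a = s * y"
    using assms by (simp add: s_def y_def real_sqrt_divide)
  then have a: "a = s^2 * y^2"
    using assms by (metis less_imp_le power_mult_distrib real_sqrt_pow2)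
  have ln_ab: "ln (a / b) = 2 * ln s"
    using \<open>0 < s\<close> \<open>0 < y\<close> by (simp add: a b ln_realpow)
  have "s + 1 > 0" "s^2 + 1 > 0" "s^2 * y^2 + y^2 > 0"
    using \<open>0 < s\<close> \<open>0 < y\<close> by (simp_all add: add_pos_nonneg add_pos_pos)
  then have gap: "3/32 * ((s^2 * y^2 - y^2) * (2 * ln s)) + 1/16 * ((s^2 * y^2 - y^2)^2 / (s^2 * y^2 + y^2))
               - (1/2) * (s * y - y)^2
             = 3/16 * y^2 * (s + 1) * ((s - 1) * (ln s - ln_approx s))"
    unfolding ln_approx_def by (simp add: divide_simps) algebra
  have "0 \<le> 3/16 * y^2 * (s + 1) * ((s - 1) * (ln s - ln_approx s))"
    using \<open>s + 1 > 0\<close> ln_minus_ln_approx_sign [OF \<open>0 < s\<close>] by simp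
  with gap have "(1/2) * (s * y - y)^2 \<le> 3/32 * ((s^2 * y^2 - y^2) * (2 * ln s))
                   + 1/16 * ((s^2 * y^2 - y^2)^2 / (s^2 * y^2 + y^2))"
    by linarith
  then show ?thesis
    unfolding ln_ab sqrt_a sqrt_b by (simp only: a b)
qed

lemma hellinger_le_jdiv_triang:
  assumes "\<And>i. i \<in> {1..n} \<Longrightarrow> 0 < P i" "\<And>i. i \<in> {1..n} \<Longrightarrow> 0 < Q i"
  shows "hellinger n P Q \<le> 3/32 * jdiv n P Q + 1/16 * triang n P Q"
  unfolding hellinger_def jdiv_def triang_def sum_distrib_left sum.distrib [symmetric]
  by (intro sum_mono hellinger_summand_le) (simp_all add: assms)

theorem proposition5p4:
  fixes n :: nat and P Q :: "nat \<Rightarrow> real"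
  assumes "n \<ge> 2" and "P \<in> Gamma n" and "Q \<in> Gamma n"
  shows "D_hDelta n P Q \<le> (3/4) * D_JDelta n P Q"
proof -
  have "hellinger n P Q \<le> 3/32 * jdiv n P Q + 1/16 * triang n P Q"
    using assms(2,3) by (intro hellinger_le_jdiv_triang) (auto simp: Gamma_def)
  then show ?thesis
    unfolding D_hDelta_def D_JDelta_def by simp
qed

end
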